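(* Let $G = K_{m_1} \otimes \cdots \otimes K_{m_t}$ with $m_i \geq 3$ for all $i$. Then $\dim(G) \geq \max\{m_i - 1 : i = 1,\dots,t\}$.
   Context: $K_r$ is the complete graph on $r$ vertices. The tensor product of graphs has vertex set the Cartesian product of vertex sets, with $(a_1,\dots,a_t)$ adjacent to $(b_1,\dots,b_t)$ iff $a_ib_i$ is an edge of the $i$-th factor for every $i$. For a connected graph and an ordered set $W=\{w_1,\dots,w_k\}$ of vertices, $r(v\mid W)=(d(v,w_1),\dots,d(v,w_k))$; $W$ is resolving if distinct vertices have distinct representations; $\dim(G)$ is the minimum size of a resolving set. *)

theory Defs
  imports Main
begin

type_synonym 'a graph = "'a set \<times> ('a \<Rightarrow> 'a \<Rightarrow> bool)"

definition verts :: "'a graph \<Rightarrow> 'a set" where "verts G = fst G"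
definition adj :: "'a graph \<Rightarrow> 'a \<Rightarrow> 'a \<Rightarrow> bool" where "adj G = snd G"

definition complete_graph :: "nat \<Rightarrow> nat graph" where
  "complete_graph r = ({0..<r}, \<lambda>a b. a \<noteq> b)"

definition tensor_product :: "'a graph list \<Rightarrow> 'a list graph" where
  "tensor_product Gs =
     ({xs. length xs = length Gs \<and> (\<forall>i<length Gs. xs ! i \<in> verts (Gs ! i))},
      \<lambda>xs ys. length xs = length Gs \<and> length ys = length Gs \<and>
              (\<forall>i<length Gs. adj (Gs ! i) (xs ! i) (ys ! i)))"

definition has_walk :: "'a graph \<Rightarrow> nat \<Rightarrow> 'a \<Rightarrow> 'a \<Rightarrow> bool" where
  "has_walk G n u v \<longleftrightarrow> (\<exists>p. length p = Suc n \<and> p ! 0 = u \<and> p ! n = v \<and>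
      (\<forall>i\<le>n. p ! i \<in> verts G) \<and> (\<forall>i<n. adj G (p ! i) (p ! Suc i)))"

text \<open>Graph distance (length of a shortest walk); meaningful for connected graphs.\<close>
definition gdist :: "'a graph \<Rightarrow> 'a \<Rightarrow> 'a \<Rightarrow> nat" where
  "gdist G u v = (LEAST n. has_walk G n u v)"

definition connected_graph :: "'a graph \<Rightarrow> bool" where
  "connected_graph G \<longleftrightarrow> (\<forall>u\<in>verts G. \<forall>v\<in>verts G. \<exists>n. has_walk G n u v)"

text \<open>W resolves G: distinct vertices have distinct distance vectors to W.
  (Order of W is irrelevant for this property.)\<close>
definition resolving :: "'a graph \<Rightarrow> 'a set \<Rightarrow> bool" where
  "resolving G W \<longleftrightarrow> W \<subseteq> verts G \<and>
     (\<forall>u\<in>verts G. \<forall>v\<in>verts G. (\<forall>w\<in>W. gdist G u w = gdist G v w) \<longrightarrow> u = v)"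

definition metric_dim :: "'a graph \<Rightarrow> nat" where
  "metric_dim G = (LEAST k. \<exists>W. finite W \<and> card W = k \<and> resolving G W)"

end

theory Submission
  imports Defs
begin

text \<open>Swapping two values a, b in one coordinate j is an involutive automorphism of
  K_{m_1} \<otimes> \<dots> \<otimes> K_{m_t}, and it preserves distances. If no vertex of W has
  j-th coordinate a or b, the swap fixes W pointwise, so it preserves every distance vector
  r(v | W); hence a resolving set W cannot miss two values of coordinate j, and the j-th
  coordinates of W already take at least m_j - 1 values. The hypothesis m_i \<ge> 3 only serves
  to make the graph connected (any two vertices have a common neighbour), so that some
  resolving set exists and dim(G) is attained.\<close>

definition involutive_automorphism :: "'a graph \<Rightarrow> ('a \<Rightarrow> 'a) \<Rightarrow> bool" where
  "involutive_automorphism G \<sigma> \<longleftrightarrow>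
     (\<forall>x\<in>verts G. \<sigma> x \<in> verts G \<and> \<sigma> (\<sigma> x) = x) \<and>
     (\<forall>x\<in>verts G. \<forall>y\<in>verts G. adj G x y \<longrightarrow> adj G (\<sigma> x) (\<sigma> y))"

lemma has_walk_homomorphism:
  assumes "\<And>x. x \<in> verts G \<Longrightarrow> f x \<in> verts H"
    and "\<And>x y. x \<in> verts G \<Longrightarrow> y \<in> verts G \<Longrightarrow> adj G x y \<Longrightarrow> adj H (f x) (f y)"
    and "has_walk G n u v"
  shows "has_walk H n (f u) (f v)"
proof -
  obtain p where "length p = Suc n" "p ! 0 = u" "p ! n = v"
    "\<forall>i\<le>n. p ! i \<in> verts G" "\<forall>i<n. adj G (p ! i) (p ! Suc i)"
    using assms(3) unfolding has_walk_def by blast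
  then show ?thesis
    unfolding has_walk_def using assms(1,2) by (intro exI[of _ "map f p"]) auto
qed

lemma gdist_involutive_automorphism:
  assumes \<sigma>: "involutive_automorphism G \<sigma>" and u: "u \<in> verts G" and v: "v \<in> verts G"
  shows "gdist G (\<sigma> u) (\<sigma> v) = gdist G u v"
proof -
  have walk: "has_walk G n (\<sigma> x) (\<sigma> y)" if "has_walk G n x y" for n x y
    using \<sigma> that unfolding involutive_automorphism_def
    by (auto intro: has_walk_homomorphism[where f = \<sigma>])
  have "has_walk G n (\<sigma> u) (\<sigma> v) \<longleftrightarrow> has_walk G n u v" for n
  proof
    assume "has_walk G n (\<sigma> u) (\<sigma> v)"
    with walk have "has_walk G n (\<sigma> (\<sigma> u)) (\<sigma> (\<sigma> v))" .
    then show "has_walk G n u v"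
      using \<sigma> u v by (simp add: involutive_automorphism_def)
  qed (rule walk)
  then show ?thesis
    unfolding gdist_def by simp
qed

lemma resolving_involutive_automorphism_fixing_imp_fixed:
  assumes W: "resolving G W" and \<sigma>: "involutive_automorphism G \<sigma>"
    and fix_W: "\<And>w. w \<in> W \<Longrightarrow> \<sigma> w = w" and x: "x \<in> verts G"
  shows "\<sigma> x = x"
proof -
  have "gdist G (\<sigma> x) w = gdist G x w" if "w \<in> W" for w
  proof -
    have "w \<in> verts G"
      using W that by (auto simp: resolving_def)
    then show ?thesis
      using gdist_involutive_automorphism[OF \<sigma> x] fix_W[OF that] by metis
  qed
  moreover have "\<sigma> x \<in> verts G"
    using \<sigma> x by (simp add: involutive_automorphism_def)
  ultimately show ?thesis
    using W x by (auto simp: resolving_def)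
qed

lemma gdist_self: "v \<in> verts G \<Longrightarrow> gdist G v v = 0"
  unfolding gdist_def has_walk_def by (rule Least_eq_0) (auto intro: exI[of _ "[v]"])

lemma gdist_eq_0_imp_eq:
  assumes "has_walk G n u v" and "gdist G u v = 0"
  shows "u = v"
proof -
  have "has_walk G (gdist G u v) u v"
    unfolding gdist_def using assms(1) by (rule LeastI)
  with assms(2) show ?thesis
    by (auto simp: has_walk_def)
qed

lemma resolving_verts:
  assumes "connected_graph G"
  shows "resolving G (verts G)"
  unfolding resolving_def
proof (intro conjI ballI impI subset_refl)
  fix u v assume u: "u \<in> verts G" and v: "v \<in> verts G"
    and "\<forall>w\<in>verts G. gdist G u w = gdist G v w"
  then have "gdist G u v = 0"
    using gdist_self by metis
  moreover obtain n where "has_walk G n u v"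
    using assms u v by (auto simp: connected_graph_def)
  ultimately show "u = v"
    using gdist_eq_0_imp_eq by metis
qed

lemma metric_dim_attained:
  assumes "finite (verts G)" and "connected_graph G"
  obtains W where "finite W" "card W = metric_dim G" "resolving G W"
proof -
  have "\<exists>k W. finite W \<and> card W = k \<and> resolving G W"
    using assms resolving_verts by blast
  from LeastI_ex[OF this] show ?thesis
    using that unfolding metric_dim_def by blast
qed

lemma finite_verts_tensor_product:
  assumes "\<And>G. G \<in> set Gs \<Longrightarrow> finite (verts G)"
  shows "finite (verts (tensor_product Gs))"
proof (rule finite_subset)
  show "verts (tensor_product Gs) \<subseteq> {xs. set xs \<subseteq> (\<Union>G\<in>set Gs. verts G) \<and> length xs = length Gs}"
    by (auto simp: tensor_product_def verts_def in_set_conv_nth) (metis nth_mem)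
  show "finite {xs. set xs \<subseteq> (\<Union>G\<in>set Gs. verts G) \<and> length xs = length Gs}"
    using assms by (intro finite_lists_length_eq) auto
qed

lemma verts_tensor_complete:
  "verts (tensor_product (map complete_graph ms)) =
     {xs. length xs = length ms \<and> (\<forall>i<length ms. xs ! i < ms ! i)}"
  by (simp add: tensor_product_def verts_def complete_graph_def)

lemma adj_tensor_complete:
  "adj (tensor_product (map complete_graph ms)) xs ys \<longleftrightarrow>
     length xs = length ms \<and> length ys = length ms \<and> (\<forall>i<length ms. xs ! i \<noteq> ys ! i)"
  by (simp add: tensor_product_def adj_def complete_graph_def)

lemma has_walk_2I:
  assumes "u \<in> verts G" "z \<in> verts G" "v \<in> verts G" "adj G u z" "adj G z v"
  shows "has_walk G 2 u v"
  unfolding has_walk_def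
proof (intro exI[of _ "[u, z, v]"] conjI allI impI)
  fix i :: nat
  show "i \<le> 2 \<Longrightarrow> [u, z, v] ! i \<in> verts G"
    using assms by (auto simp: le_Suc_eq numeral_2_eq_2)
  show "i < 2 \<Longrightarrow> adj G ([u, z, v] ! i) ([u, z, v] ! Suc i)"
    using assms by (auto simp: less_Suc_eq numeral_2_eq_2)
qed simp_all

lemma has_walk_2_tensor_complete:
  assumes ms: "\<forall>i<length ms. 3 \<le> ms ! i"
    and u: "u \<in> verts (tensor_product (map complete_graph ms))"
    and v: "v \<in> verts (tensor_product (map complete_graph ms))"
  shows "has_walk (tensor_product (map complete_graph ms)) 2 u v"
proof -
  have "\<exists>c. c < ms ! i \<and> c \<noteq> u ! i \<and> c \<noteq> v ! i" if "i < length ms" for i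
  proof -
    have "\<exists>c<3. c \<noteq> u ! i \<and> c \<noteq> v ! i"
      by presburger
    then show ?thesis
      using ms that by (meson less_le_trans)
  qed
  then obtain c where c: "\<And>i. i < length ms \<Longrightarrow> c i < ms ! i \<and> c i \<noteq> u ! i \<and> c i \<noteq> v ! i"
    by metis
  define z where "z = map c [0..<length ms]"
  have z: "z \<in> verts (tensor_product (map complete_graph ms))"
    using c by (simp add: z_def verts_tensor_complete)
  have "adj (tensor_product (map complete_graph ms)) u z"
    using u c by (auto simp: z_def verts_tensor_complete adj_tensor_complete) metis
  moreover have "adj (tensor_product (map complete_graph ms)) z v"
    using v c by (auto simp: z_def verts_tensor_complete adj_tensor_complete)
  ultimately show ?thesis
    by (rule has_walk_2I[OF u z v])
qed

lemma connected_tensor_complete: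
  "\<forall>i<length ms. 3 \<le> ms ! i \<Longrightarrow> connected_graph (tensor_product (map complete_graph ms))"
  unfolding connected_graph_def using has_walk_2_tensor_complete by blast

lemma involutive_automorphism_swap_coordinate:
  assumes "j < length ms" "a < ms ! j" "b < ms ! j"
  shows "involutive_automorphism (tensor_product (map complete_graph ms))
           (\<lambda>xs. xs[j := (id(a := b, b := a)) (xs ! j)])"
  using assms
  by (auto simp: involutive_automorphism_def verts_tensor_complete adj_tensor_complete
      nth_list_update)

lemma resolving_tensor_complete_coordinate_values:
  assumes W: "resolving (tensor_product (map complete_graph ms)) W"
    and pos: "\<forall>i<length ms. 0 < ms ! i" and j: "j < length ms"
    and a: "a < ms ! j" "a \<notin> (\<lambda>w. w ! j) ` W"
    and b: "b < ms ! j" "b \<notin> (\<lambda>w. w ! j) ` W"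
  shows "a = b"
proof -
  define \<sigma> where "\<sigma> = (\<lambda>xs::nat list. xs[j := (id(a := b, b := a)) (xs ! j)])"
  define x where "x = (replicate (length ms) 0)[j := a]"
  have "x \<in> verts (tensor_product (map complete_graph ms))"
    using pos j a by (auto simp: x_def verts_tensor_complete nth_list_update)
  moreover have "\<sigma> w = w" if "w \<in> W" for w
    using that a b by (auto simp: \<sigma>_def)
  ultimately have "\<sigma> x = x"
    using resolving_involutive_automorphism_fixing_imp_fixed[OF W]
      involutive_automorphism_swap_coordinate[OF j a(1) b(1)]
    unfolding \<sigma>_def by blast
  moreover have "\<sigma> x ! j = b"
    using j by (simp add: \<sigma>_def x_def)
  ultimately show ?thesis
    using j by (simp add: x_def)
qed

lemma card_resolving_tensor_complete_ge:
  assumes "finite W" and "resolving (tensor_product (map complete_graph ms)) W"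
    and "\<forall>i<length ms. 0 < ms ! i" and "j < length ms"
  shows "ms ! j - 1 \<le> card W"
proof -
  define S where "S = (\<lambda>w. w ! j) ` W"
  have "card S \<le> card W"
    unfolding S_def using assms(1) by (rule card_image_le)
  moreover have "ms ! j - card S \<le> card ({0..<ms ! j} - S)"
    using diff_card_le_card_Diff[of S "{0..<ms ! j}"] assms(1) by (simp add: S_def)
  moreover have "card ({0..<ms ! j} - S) \<le> Suc 0"
    using resolving_tensor_complete_coordinate_values[OF assms(2-4)]
    by (subst card_le_Suc0_iff_eq) (auto simp: S_def)
  ultimately show ?thesis
    by linarith
qed

theorem corollary2p3:
  fixes ms :: "nat list"
  assumes "ms \<noteq> []"
    and "\<forall>i<length ms. ms ! i \<ge> 3"
  shows "metric_dim (tensor_product (map complete_graph ms))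
           \<ge> Max ((\<lambda>m. m - 1) ` set ms)"
proof -
  let ?G = "tensor_product (map complete_graph ms)"
  have "finite (verts ?G)"
    by (rule finite_verts_tensor_product) (auto simp: verts_def complete_graph_def)
  then obtain W where W: "finite W" "card W = metric_dim ?G" "resolving ?G W"
    using metric_dim_attained connected_tensor_complete[OF assms(2)] by blast
  have "Max ((\<lambda>m. m - 1) ` set ms) \<in> (\<lambda>m. m - 1) ` set ms"
    using assms(1) by (intro Max_in) auto
  then obtain j where j: "j < length ms" "Max ((\<lambda>m. m - 1) ` set ms) = ms ! j - 1"
    by (auto simp: in_set_conv_nth)
  have "\<forall>i<length ms. 0 < ms ! i"
    using assms(2) by fastforce
  then show ?thesis
    using card_resolving_tensor_complete_ge[OF W(1,3) _ j(1)] W(2) j(2) by simp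
qed

end
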